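(* If $X$ is a set star Hurewicz space and $Y$ is a compact space, then $X \times Y$ is nearly set star Hurewicz.
   Context: For a subset $A$ of a space $X$ and a collection $\mathcal{U}$ of subsets of $X$, ${\rm St}(A,\mathcal{U}) = \bigcup\{U \in \mathcal{U}: U \cap A \neq \emptyset\}$. A space $X$ is set star Hurewicz if for each nonempty $A \subset X$ and each sequence $(\mathcal{U}_n: n\in\mathbb{N})$ of collections of sets open in $X$ with $\overline{A} \subset \bigcup\mathcal{U}_n$ for all $n$, there are finite $\mathcal{V}_n \subset \mathcal{U}_n$ such that each $x \in A$ lies in ${\rm St}(\bigcup\mathcal{V}_n,\mathcal{U}_n)$ for all but finitely many $n$. A space $Z$ is nearly set star Hurewicz if for each nonempty $A \subset Z$ and each sequence $(\mathcal{U}_n: n\in\mathbb{N})$ of open covers of $Z$ there are finite $\mathcal{V}_n \subset \mathcal{U}_n$ such that each $z \in A$ lies in ${\rm St}(\bigcup\mathcal{V}_n,\mathcal{U}_n)$ for all but finitely many $n$. *)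

theory Defs
  imports "HOL-Analysis.Analysis"
begin

definition star :: "'a set \<Rightarrow> 'a set set \<Rightarrow> 'a set" where
  "star A \<U> = \<Union>{U \<in> \<U>. U \<inter> A \<noteq> {}}"

definition set_star_Hurewicz :: "'a topology \<Rightarrow> bool" where
  "set_star_Hurewicz X \<longleftrightarrow>
     (\<forall>A \<U>. A \<noteq> {} \<and> A \<subseteq> topspace X \<and>
        (\<forall>n. (\<forall>U\<in>\<U> n. openin X U) \<and> X closure_of A \<subseteq> \<Union>(\<U> n)) \<longrightarrow>
        (\<exists>\<V>. (\<forall>n. finite (\<V> n) \<and> \<V> n \<subseteq> \<U> n) \<and>
              (\<forall>x\<in>A. eventually (\<lambda>n. x \<in> star (\<Union>(\<V> n)) (\<U> n)) sequentially)))"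

definition nearly_set_star_Hurewicz :: "'a topology \<Rightarrow> bool" where
  "nearly_set_star_Hurewicz Z \<longleftrightarrow>
     (\<forall>A \<U>. A \<noteq> {} \<and> A \<subseteq> topspace Z \<and>
        (\<forall>n. (\<forall>U\<in>\<U> n. openin Z U) \<and> \<Union>(\<U> n) = topspace Z) \<longrightarrow>
        (\<exists>\<V>. (\<forall>n. finite (\<V> n) \<and> \<V> n \<subseteq> \<U> n) \<and>
              (\<forall>z\<in>A. eventually (\<lambda>n. z \<in> star (\<Union>(\<V> n)) (\<U> n)) sequentially)))"

end

theory Submission
  imports Defs
begin

text \<open>
  Given an open cover \<open>\<U>\<close> of \<open>X \<times> Y\<close>, call an open \<open>W \<subseteq> X\<close> finitely sliced if finitely
  many members of \<open>\<U>\<close> suffice to contain each slice \<open>W \<times> {y}\<close> in a single member.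
  By compactness of \<open>Y\<close> (a tube argument) these sets cover \<open>X\<close>, so the set star Hurewicz
  property applied to \<open>fst ` A\<close> selects finitely many of them at each stage. The finitely many
  members of \<open>\<U> n\<close> witnessing that the selected sets are finitely sliced form \<open>\<V> n\<close>: if
  \<open>x \<in> W'\<close> with \<open>W'\<close> finitely sliced meeting a selected \<open>W\<close>, then for every \<open>y\<close> the member
  of \<open>\<U> n\<close> containing \<open>W' \<times> {y}\<close> contains \<open>(x, y)\<close> and meets the member of \<open>\<V> n\<close>
  containing \<open>W \<times> {y}\<close>.
\<close>

definition slices_covered_by :: "'b topology \<Rightarrow> ('a \<times> 'b) set set \<Rightarrow> 'a set \<Rightarrow> bool" where
  "slices_covered_by Y \<U> W \<longleftrightarrow> (\<forall>y\<in>topspace Y. \<exists>U\<in>\<U>. W \<times> {y} \<subseteq> U)"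

definition finitely_sliced_opens ::
    "'a topology \<Rightarrow> 'b topology \<Rightarrow> ('a \<times> 'b) set set \<Rightarrow> 'a set set" where
  "finitely_sliced_opens X Y \<U> =
     {W. openin X W \<and> (\<exists>\<F>. finite \<F> \<and> \<F> \<subseteq> \<U> \<and> slices_covered_by Y \<F> W)}"

lemma slices_covered_by_mono:
  "slices_covered_by Y \<F> W \<Longrightarrow> \<F> \<subseteq> \<G> \<Longrightarrow> slices_covered_by Y \<G> W"
  unfolding slices_covered_by_def by blast

lemma compact_space_slices_covered_by_finite:
  assumes Y: "compact_space Y" and x: "x \<in> topspace X"
    and opn: "\<forall>U\<in>\<U>. openin (prod_topology X Y) U" and cov: "{x} \<times> topspace Y \<subseteq> \<Union>\<U>"
  obtains W \<F> where "openin X W" "x \<in> W" "finite \<F>" "\<F> \<subseteq> \<U>" "slices_covered_by Y \<F> W"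
proof -
  have "\<forall>y\<in>topspace Y. \<exists>U\<in>\<U>. (x, y) \<in> U"
    using cov by blast
  then obtain U where U: "\<And>y. y \<in> topspace Y \<Longrightarrow> U y \<in> \<U> \<and> (x, y) \<in> U y"
    by metis
  have "\<exists>W V. openin X W \<and> openin Y V \<and> x \<in> W \<and> y \<in> V \<and> W \<times> V \<subseteq> U y"
    if "y \<in> topspace Y" for y
    using U [OF that] opn unfolding openin_prod_topology_alt by blast
  then obtain W V where UWV: "\<And>y. y \<in> topspace Y \<Longrightarrow> U y \<in> \<U> \<and> openin X (W y) \<and>
      openin Y (V y) \<and> x \<in> W y \<and> y \<in> V y \<and> W y \<times> V y \<subseteq> U y"
    using U by metis
  obtain \<D> where "finite \<D>" "\<D> \<subseteq> V ` topspace Y" "topspace Y \<subseteq> \<Union>\<D>"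
    using compactinD [OF Y [unfolded compact_space_def], of "V ` topspace Y"] UWV by blast
  then obtain D where D: "finite D" "D \<subseteq> topspace Y" "topspace Y \<subseteq> \<Union>(V ` D)"
    by (metis finite_subset_image)
  show thesis
  proof
    show "openin X (\<Inter>(W ` D) \<inter> topspace X)"
      using D UWV by (intro openin_INT) auto
    show "x \<in> \<Inter>(W ` D) \<inter> topspace X"
      using D UWV x by auto
    show "finite (U ` D)" "U ` D \<subseteq> \<U>"
      using D UWV by auto
    show "slices_covered_by Y (U ` D) (\<Inter>(W ` D) \<inter> topspace X)"
      unfolding slices_covered_by_def
    proof
      fix y assume "y \<in> topspace Y"
      then obtain d where "d \<in> D" "y \<in> V d"
        using D by auto
      then have "(\<Inter>(W ` D) \<inter> topspace X) \<times> {y} \<subseteq> U d"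
        using D UWV by blast
      then show "\<exists>U'\<in>U ` D. (\<Inter>(W ` D) \<inter> topspace X) \<times> {y} \<subseteq> U'"
        using \<open>d \<in> D\<close> by blast
    qed
  qed
qed

lemma topspace_subset_Union_finitely_sliced_opens:
  assumes "compact_space Y" and "\<forall>U\<in>\<U>. openin (prod_topology X Y) U"
    and "\<Union>\<U> = topspace (prod_topology X Y)"
  shows "topspace X \<subseteq> \<Union>(finitely_sliced_opens X Y \<U>)"
proof
  fix x assume x: "x \<in> topspace X"
  moreover have "{x} \<times> topspace Y \<subseteq> \<Union>\<U>"
    using x assms(3) by auto
  ultimately obtain W \<F> where "openin X W" "x \<in> W" "finite \<F>" "\<F> \<subseteq> \<U>"
      "slices_covered_by Y \<F> W"
    using compact_space_slices_covered_by_finite assms(1,2) by metis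
  then show "x \<in> \<Union>(finitely_sliced_opens X Y \<U>)"
    unfolding finitely_sliced_opens_def by (intro UnionI [of W]) auto
qed

lemma slices_covered_by_finite_common:
  assumes "finite \<V>" and "\<forall>W\<in>\<V>. \<exists>\<F>. finite \<F> \<and> \<F> \<subseteq> \<U> \<and> slices_covered_by Y \<F> W"
  shows "\<exists>\<F>. finite \<F> \<and> \<F> \<subseteq> \<U> \<and> (\<forall>W\<in>\<V>. slices_covered_by Y \<F> W)"
proof -
  obtain f where f: "\<forall>W\<in>\<V>. finite (f W) \<and> f W \<subseteq> \<U> \<and> slices_covered_by Y (f W) W"
    using bchoice [OF assms(2)] by blast
  show ?thesis
  proof (intro exI conjI ballI)
    show "finite (\<Union>(f ` \<V>))" "\<Union>(f ` \<V>) \<subseteq> \<U>"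
      using assms(1) f by auto
    show "slices_covered_by Y (\<Union>(f ` \<V>)) W" if "W \<in> \<V>" for W
      using f that slices_covered_by_mono by (metis UN_upper)
  qed
qed

lemma star_Pair_slices_covered_by:
  assumes x: "x \<in> star (\<Union>\<V>) \<W>" and y: "y \<in> topspace Y"
    and \<W>: "\<forall>W\<in>\<W>. slices_covered_by Y \<U> W" and \<V>: "\<forall>W\<in>\<V>. slices_covered_by Y \<F> W"
  shows "(x, y) \<in> star (\<Union>\<F>) \<U>"
proof -
  obtain W' W p where "W' \<in> \<W>" "x \<in> W'" "W \<in> \<V>" "p \<in> W'" "p \<in> W"
    using x unfolding star_def by blast
  moreover obtain U where "U \<in> \<U>" "W' \<times> {y} \<subseteq> U"
    using \<W> \<open>W' \<in> \<W>\<close> y unfolding slices_covered_by_def by blast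
  moreover obtain F where "F \<in> \<F>" "W \<times> {y} \<subseteq> F"
    using \<V> \<open>W \<in> \<V>\<close> y unfolding slices_covered_by_def by blast
  ultimately have "(x, y) \<in> U" "(p, y) \<in> U \<inter> \<Union>\<F>"
    by blast+
  then show ?thesis
    unfolding star_def using \<open>U \<in> \<U>\<close> by blast
qed

lemma star_finitely_sliced_opens_lift:
  assumes "finite \<V>" and "\<V> \<subseteq> finitely_sliced_opens X Y \<U>"
  shows "\<exists>\<F>. finite \<F> \<and> \<F> \<subseteq> \<U> \<and>
    (\<forall>x\<in>star (\<Union>\<V>) (finitely_sliced_opens X Y \<U>). \<forall>y\<in>topspace Y. (x, y) \<in> star (\<Union>\<F>) \<U>)"
proof -
  have "\<forall>W\<in>\<V>. \<exists>\<F>. finite \<F> \<and> \<F> \<subseteq> \<U> \<and> slices_covered_by Y \<F> W"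
    using assms(2) unfolding finitely_sliced_opens_def by auto
  then obtain \<F> where \<F>: "finite \<F>" "\<F> \<subseteq> \<U>" "\<forall>W\<in>\<V>. slices_covered_by Y \<F> W"
    using slices_covered_by_finite_common [OF assms(1)] by meson
  have "\<forall>W\<in>finitely_sliced_opens X Y \<U>. slices_covered_by Y \<U> W"
    unfolding finitely_sliced_opens_def using slices_covered_by_mono by blast
  with \<F> show ?thesis
    by (blast intro: star_Pair_slices_covered_by)
qed

theorem corollary3p16:
  fixes X :: "'a topology" and Y :: "'b topology"
  assumes "set_star_Hurewicz X" and "compact_space Y"
  shows "nearly_set_star_Hurewicz (prod_topology X Y)"
  unfolding nearly_set_star_Hurewicz_def
proof (intro allI impI, elim conjE)
  fix A :: "('a \<times> 'b) set" and \<U> :: "nat \<Rightarrow> ('a \<times> 'b) set set"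
  assume "A \<noteq> {}" and A: "A \<subseteq> topspace (prod_topology X Y)"
    and \<U>: "\<forall>n. (\<forall>U\<in>\<U> n. openin (prod_topology X Y) U) \<and> \<Union>(\<U> n) = topspace (prod_topology X Y)"
  define \<W> where "\<W> n = finitely_sliced_opens X Y (\<U> n)" for n
  have "X closure_of (fst ` A) \<subseteq> \<Union>(\<W> n)" for n
    using closure_of_subset_topspace topspace_subset_Union_finitely_sliced_opens [OF assms(2)] \<U>
    unfolding \<W>_def by (meson subset_trans)
  moreover have "fst ` A \<noteq> {}" "fst ` A \<subseteq> topspace X" "\<forall>W\<in>\<W> n. openin X W" for n
    using \<open>A \<noteq> {}\<close> A by (auto simp: \<W>_def finitely_sliced_opens_def)
  ultimately obtain \<V> where \<V>: "\<forall>n. finite (\<V> n) \<and> \<V> n \<subseteq> \<W> n"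
    and ev: "\<forall>x\<in>fst ` A. eventually (\<lambda>n. x \<in> star (\<Union>(\<V> n)) (\<W> n)) sequentially"
    using assms(1) [unfolded set_star_Hurewicz_def, rule_format, of "fst ` A" \<W>] by blast
  have "\<forall>n. \<exists>\<F>. finite \<F> \<and> \<F> \<subseteq> \<U> n \<and>
    (\<forall>x\<in>star (\<Union>(\<V> n)) (\<W> n). \<forall>y\<in>topspace Y. (x, y) \<in> star (\<Union>\<F>) (\<U> n))"
    using \<V> unfolding \<W>_def by (blast intro: star_finitely_sliced_opens_lift)
  then obtain \<F> where \<F>: "\<forall>n. finite (\<F> n) \<and> \<F> n \<subseteq> \<U> n \<and>
    (\<forall>x\<in>star (\<Union>(\<V> n)) (\<W> n). \<forall>y\<in>topspace Y. (x, y) \<in> star (\<Union>(\<F> n)) (\<U> n))"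
    by (rule choice [THEN exE])
  have "eventually (\<lambda>n. (x, y) \<in> star (\<Union>(\<F> n)) (\<U> n)) sequentially" if "(x, y) \<in> A" for x y
    using ev [rule_format, of x] that A \<F> by (force elim: eventually_mono)
  with \<F> show "\<exists>\<V>. (\<forall>n. finite (\<V> n) \<and> \<V> n \<subseteq> \<U> n) \<and>
      (\<forall>z\<in>A. eventually (\<lambda>n. z \<in> star (\<Union>(\<V> n)) (\<U> n)) sequentially)"
    by (intro exI [of _ \<F>]) auto
qed

end
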